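(* Let $K$ be a commutative domain, $n\in\mathbb{N}_*$, $B$ a polynomial $K$-algebra in $n$ indeterminates, and $A$ the $K$-subalgebra of $B$ generated by $n$ elements $F_1,\dots,F_n\in B$ that are algebraically independent over $K$. Then the separable degree $[B_*^{-1}B:A_*^{-1}A]_s$ of the field extension $A_*^{-1}A\subset B_*^{-1}B$ is at most $\prod_{1\le i\le n}\deg F_i$.
   Context: For a domain $R$, $R_*=R\setminus\{0\}$ and $R_*^{-1}R$ denotes its field of fractions; $\mathbb{N}_*=\mathbb{N}\setminus\{0\}$. $[L:M]_s$ denotes the separable degree of a field extension $M\subset L$. *)

theory Defs
  imports "HOL-Library.Poly_Mapping" "HOL-Library.Extended_Nat"
    "HOL-Computational_Algebra.Polynomial" "HOL-Computational_Algebra.Fraction_Field"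
begin

text \<open>Polynomials over a coefficient ring 'a in the indeterminates indexed by a finite
  type 'v (so n = CARD('v) \<ge> 1) are represented as finitely supported maps from exponent vectors to 'a
  (monomial exponent vector \<mapsto> coefficient).\<close>

type_synonym ('v, 'a) mpoly = "('v \<Rightarrow>\<^sub>0 nat) \<Rightarrow>\<^sub>0 'a"

definition mconst :: "'a::zero \<Rightarrow> ('v, 'a) mpoly" where
  "mconst c = Poly_Mapping.single 0 c"

text \<open>Total degree (degree of the zero polynomial set to 0).\<close>
definition mpoly_deg :: "('v::finite, 'a::zero) mpoly \<Rightarrow> nat" where
  "mpoly_deg p = (if p = 0 then 0 else Max ((\<lambda>m. \<Sum>v\<in>UNIV. Poly_Mapping.lookup m v) ` Poly_Mapping.keys p))"

definition mpoly_eval :: "('a::zero \<Rightarrow> 'r::comm_ring_1) \<Rightarrow> ('w::finite, 'a) mpoly \<Rightarrow> ('w \<Rightarrow> 'r) \<Rightarrow> 'r" where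
  "mpoly_eval \<phi> P F = (\<Sum>m\<in>Poly_Mapping.keys P. \<phi> (Poly_Mapping.lookup P m) * (\<Prod>w\<in>UNIV. F w ^ Poly_Mapping.lookup m w))"

definition alg_indep :: "('v::finite \<Rightarrow> ('u, 'a::comm_ring_1) mpoly) \<Rightarrow> bool" where
  "alg_indep F \<longleftrightarrow> (\<forall>P :: ('v, 'a) mpoly. mpoly_eval mconst P F = 0 \<longrightarrow> P = 0)"

definition gen_subalg :: "('v::finite \<Rightarrow> ('u, 'a::comm_ring_1) mpoly) \<Rightarrow> ('u, 'a) mpoly set" where
  "gen_subalg F = range (\<lambda>P :: ('v, 'a) mpoly. mpoly_eval mconst P F)"

definition frac_of :: "'r::idom set \<Rightarrow> 'r fract set" where
  "frac_of S = {Fract a b | a b. a \<in> S \<and> b \<in> S \<and> b \<noteq> 0}"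

text \<open>x is separable (algebraic) over the subfield M: x is a root of a nonzero polynomial with
  coefficients in M which is separable, i.e. coprime to its derivative in M[X].\<close>
definition poly_over :: "'f::field set \<Rightarrow> 'f poly \<Rightarrow> bool" where
  "poly_over M p \<longleftrightarrow> set (coeffs p) \<subseteq> M"

definition separable_over :: "'f::field set \<Rightarrow> 'f \<Rightarrow> bool" where
  "separable_over M x \<longleftrightarrow> (\<exists>p. poly_over M p \<and> p \<noteq> 0 \<and> poly p x = 0 \<and>
      (\<exists>u v. poly_over M u \<and> poly_over M v \<and> u * p + v * pderiv p = 1))"

definition sep_closure :: "'f::field set \<Rightarrow> 'f set \<Rightarrow> 'f set" where
  "sep_closure M L = {x \<in> L. separable_over M x}"

definition span_over :: "'f::field set \<Rightarrow> 'f set \<Rightarrow> 'f set" where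
  "span_over M b = {\<Sum>y\<in>b. c y * y | c. \<forall>y\<in>b. c y \<in> M}"

text \<open>Dimension of S as a vector space over the subfield M (infinity if not finite):
  minimal cardinality of a finite M-spanning subset of S.\<close>
definition ext_degree :: "'f::field set \<Rightarrow> 'f set \<Rightarrow> enat" where
  "ext_degree M S = (INF b\<in>{b. b \<subseteq> S \<and> finite b \<and> S \<subseteq> span_over M b}. enat (card b))"

text \<open>Separable degree [L:M]_s = [L_s:M], L_s the separable closure of M in L.\<close>
definition sep_degree :: "'f::field set \<Rightarrow> 'f set \<Rightarrow> enat" where
  "sep_degree M L = ext_degree M (sep_closure M L)"

end

theory Submission
  imports Defs "HOL-Library.FuncSet" "HOL-Computational_Algebra.Polynomial_Factorial"
begin

text \<open>
  Let \<open>K\<close> be the coefficient domain, \<open>B = K[X\<^sub>1,\<dots>,X\<^sub>n]\<close>, \<open>A = K[F\<^sub>1,\<dots>,F\<^sub>n]\<close> and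
  \<open>d\<^sub>i = deg F\<^sub>i\<close>. Clearing denominators turns \<open>s\<close> elements of \<open>Frac B\<close> that are
  linearly independent over \<open>Frac A\<close> into elements \<open>g\<^sub>1,\<dots>,g\<^sub>s\<close> of \<open>B\<close> that are
  linearly independent over \<open>A\<close>, all of degree at most some \<open>E\<close>. By algebraic independence
  of the \<open>F\<^sub>i\<close>, the products \<open>F\<^sup>\<beta> g\<^sub>j\<close> with \<open>\<Sum>\<^sub>i \<beta>\<^sub>i d\<^sub>i \<le> D\<close> are
  \<open>K\<close>-linearly independent, and they have degree at most \<open>D + E\<close>. Writing \<open>W(D)\<close> for the
  number of such \<open>\<beta>\<close>, this gives \<open>s W(D) \<le> #{\<alpha>. |\<alpha>| \<le> D + E} \<le> d\<^sub>1\<cdots>d\<^sub>n W(D + E)\<close>, the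
  second inequality by dividing each \<open>\<alpha>\<^sub>i\<close> by \<open>d\<^sub>i\<close> with remainder. Iterating,
  \<open>s\<^sup>k \<le> (d\<^sub>1\<cdots>d\<^sub>n)\<^sup>k W(kE)\<close>, and since \<open>W\<close> grows only polynomially, \<open>s \<le> d\<^sub>1\<cdots>d\<^sub>n\<close>.
\<close>

section \<open>Substitution into polynomials\<close>

lemma poly_mapping_sum_single:
  "p = (\<Sum>a\<in>Poly_Mapping.keys p. Poly_Mapping.single a (Poly_Mapping.lookup p a))"
  by (rule poly_mapping_eqI) (simp add: lookup_sum lookup_single when_def in_keys_iff)

lemma lookup_map_zero:
  "f 0 = 0 \<Longrightarrow> Poly_Mapping.lookup (Poly_Mapping.map f p) k = f (Poly_Mapping.lookup p k)"
  by transfer (simp add: when_def)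

lemma lookup_single_0_mult:
  "Poly_Mapping.lookup (Poly_Mapping.single 0 c * p) k = (c::'b::comm_semiring_1) * Poly_Mapping.lookup p k"
  by (simp add: lookup_map_zero flip: mult_map_scale_conv_mult)

lemma mconst_add: "mconst a + mconst b = mconst (a + b)"
  by (simp add: mconst_def single_add)

lemma mconst_mult: "mconst a * mconst b = mconst (a * b)"
  by (simp add: mconst_def mult_single)

lemma mconst_0 [simp]: "mconst 0 = 0"
  by (simp add: mconst_def)

lemma mconst_1 [simp]: "mconst 1 = 1"
  by (simp add: mconst_def)

abbreviation mpoly_subst :: "('w::finite, 'a::comm_ring_1) mpoly \<Rightarrow> ('w \<Rightarrow> ('v, 'a) mpoly) \<Rightarrow> ('v, 'a) mpoly" where
  "mpoly_subst P F \<equiv> mpoly_eval mconst P F"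

definition eval_monomial :: "('w::finite \<Rightarrow> 'r::comm_ring_1) \<Rightarrow> ('w \<Rightarrow>\<^sub>0 nat) \<Rightarrow> 'r" where
  "eval_monomial F m = (\<Prod>w\<in>UNIV. F w ^ Poly_Mapping.lookup m w)"

lemma eval_monomial_0 [simp]: "eval_monomial F 0 = 1"
  by (simp add: eval_monomial_def)

lemma eval_monomial_add: "eval_monomial F (a + b) = eval_monomial F a * eval_monomial F b"
  by (simp add: eval_monomial_def lookup_add power_add prod.distrib)

lemma eval_monomial_single: "eval_monomial F (Poly_Mapping.single w 1) = F w"
proof -
  have "eval_monomial F (Poly_Mapping.single w 1) = (\<Prod>v\<in>UNIV. if v = w then F v else 1)"
    unfolding eval_monomial_def by (rule prod.cong) (auto simp: lookup_single)
  then show ?thesis by simp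
qed

lemma mpoly_subst_eq_sum:
  fixes F :: "'w::finite \<Rightarrow> ('v, 'a::comm_ring_1) mpoly"
  assumes "finite S" "Poly_Mapping.keys P \<subseteq> S"
  shows "mpoly_subst P F = (\<Sum>m\<in>S. mconst (Poly_Mapping.lookup P m) * eval_monomial F m)"
  unfolding mpoly_eval_def eval_monomial_def
  by (rule sum.mono_neutral_left) (use assms in \<open>auto simp: in_keys_iff\<close>)

lemma mpoly_subst_single:
  fixes F :: "'w::finite \<Rightarrow> ('v, 'a::comm_ring_1) mpoly"
  shows "mpoly_subst (Poly_Mapping.single m c) F = mconst c * eval_monomial F m"
  by (subst mpoly_subst_eq_sum[of "{m}"]) auto

lemma mpoly_subst_0 [simp]: "mpoly_subst 0 F = 0"
  by (simp add: mpoly_eval_def)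

lemma mpoly_subst_add:
  fixes F :: "'w::finite \<Rightarrow> ('v, 'a::comm_ring_1) mpoly"
  shows "mpoly_subst (P + Q) F = mpoly_subst P F + mpoly_subst Q F"
proof -
  let ?S = "Poly_Mapping.keys P \<union> Poly_Mapping.keys Q"
  have "mpoly_subst (P + Q) F = (\<Sum>m\<in>?S. mconst (Poly_Mapping.lookup (P + Q) m) * eval_monomial F m)"
    by (rule mpoly_subst_eq_sum) (simp_all add: keys_add)
  also have "\<dots> = (\<Sum>m\<in>?S. mconst (Poly_Mapping.lookup P m) * eval_monomial F m)
      + (\<Sum>m\<in>?S. mconst (Poly_Mapping.lookup Q m) * eval_monomial F m)"
    by (simp add: lookup_add flip: mconst_add add: distrib_right sum.distrib)
  also have "\<dots> = mpoly_subst P F + mpoly_subst Q F"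
    using mpoly_subst_eq_sum[of ?S P F] mpoly_subst_eq_sum[of ?S Q F] by simp
  finally show ?thesis .
qed

lemma mpoly_subst_diff:
  fixes F :: "'w::finite \<Rightarrow> ('v, 'a::comm_ring_1) mpoly"
  shows "mpoly_subst (P - Q) F = mpoly_subst P F - mpoly_subst Q F"
  using mpoly_subst_add[of "P - Q" Q F] by (simp add: eq_diff_eq)

lemma mpoly_subst_sum:
  fixes F :: "'w::finite \<Rightarrow> ('v, 'a::comm_ring_1) mpoly"
  shows "mpoly_subst (sum f S) F = (\<Sum>i\<in>S. mpoly_subst (f i) F)"
  by (induction S rule: infinite_finite_induct) (simp_all add: mpoly_subst_add)

lemma mpoly_subst_mult:
  fixes F :: "'w::finite \<Rightarrow> ('v, 'a::comm_ring_1) mpoly"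
  shows "mpoly_subst (P * Q) F = mpoly_subst P F * mpoly_subst Q F"
proof -
  let ?P = "Poly_Mapping.lookup P" and ?Q = "Poly_Mapping.lookup Q"
  have "P * Q = (\<Sum>a\<in>Poly_Mapping.keys P. Poly_Mapping.single a (?P a))
      * (\<Sum>b\<in>Poly_Mapping.keys Q. Poly_Mapping.single b (?Q b))"
    by (simp flip: poly_mapping_sum_single)
  also have "\<dots> = (\<Sum>a\<in>Poly_Mapping.keys P. \<Sum>b\<in>Poly_Mapping.keys Q.
      Poly_Mapping.single (a + b) (?P a * ?Q b))"
    by (simp add: sum_product mult_single)
  finally have "mpoly_subst (P * Q) F = (\<Sum>a\<in>Poly_Mapping.keys P. \<Sum>b\<in>Poly_Mapping.keys Q.
      mconst (?P a) * eval_monomial F a * (mconst (?Q b) * eval_monomial F b))"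
    by (simp add: mpoly_subst_sum mpoly_subst_single eval_monomial_add mult_ac flip: mconst_mult)
  also have "\<dots> = mpoly_subst P F * mpoly_subst Q F"
    by (simp add: mpoly_eval_def eval_monomial_def sum_product)
  finally show ?thesis .
qed

lemma gen_subalg_0: "0 \<in> gen_subalg F"
  unfolding gen_subalg_def by (rule range_eqI[of _ _ 0]) simp

lemma gen_subalg_1: "1 \<in> gen_subalg F"
  unfolding gen_subalg_def using mpoly_subst_single[of 0 1 F]
  by (intro range_eqI[of _ _ 1]) simp

lemma gen_subalg_mult:
  assumes "a \<in> gen_subalg F" "b \<in> gen_subalg F"
  shows "a * b \<in> gen_subalg F"
proof -
  obtain P Q where "a = mpoly_subst P F" "b = mpoly_subst Q F"
    using assms unfolding gen_subalg_def by blast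
  then have "a * b = mpoly_subst (P * Q) F"
    by (simp add: mpoly_subst_mult)
  then show ?thesis
    unfolding gen_subalg_def by blast
qed

lemma gen_subalg_uminus:
  assumes "a \<in> gen_subalg F"
  shows "- a \<in> gen_subalg F"
proof -
  obtain P where "a = mpoly_subst P F"
    using assms unfolding gen_subalg_def by blast
  then have "- a = mpoly_subst (- P) F"
    using mpoly_subst_diff[of 0 P F] by simp
  then show ?thesis
    unfolding gen_subalg_def by blast
qed

section \<open>Total degree\<close>

definition monomial_deg :: "('v::finite \<Rightarrow>\<^sub>0 nat) \<Rightarrow> nat" where
  "monomial_deg m = (\<Sum>v\<in>UNIV. Poly_Mapping.lookup m v)"

definition deg_le :: "('v::finite, 'a::zero) mpoly \<Rightarrow> nat \<Rightarrow> bool" where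
  "deg_le p D \<longleftrightarrow> (\<forall>m\<in>Poly_Mapping.keys p. monomial_deg m \<le> D)"

lemma monomial_deg_add: "monomial_deg (a + b) = monomial_deg a + monomial_deg b"
  by (simp add: monomial_deg_def lookup_add sum.distrib)

lemma monomial_deg_eq_0_iff: "monomial_deg m = 0 \<longleftrightarrow> m = 0"
  unfolding monomial_deg_def by (auto simp: poly_mapping_eq_iff fun_eq_iff)

lemma deg_le_mono: "deg_le p D \<Longrightarrow> D \<le> D' \<Longrightarrow> deg_le p D'"
  unfolding deg_le_def by fastforce

lemma deg_le_mpoly_deg: "deg_le p (mpoly_deg p)"
  unfolding deg_le_def mpoly_deg_def monomial_deg_def by (auto intro!: Max_ge)

lemma deg_le_one: "deg_le (1::('v::finite, 'a::comm_semiring_1) mpoly) 0"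
  by (simp add: deg_le_def monomial_deg_def)

lemma deg_le_mult:
  fixes p q :: "('v::finite, 'a::comm_semiring_1) mpoly"
  assumes "deg_le p D" "deg_le q D'"
  shows "deg_le (p * q) (D + D')"
  unfolding deg_le_def
proof
  fix m assume "m \<in> Poly_Mapping.keys (p * q)"
  then obtain a b where "m = a + b" "a \<in> Poly_Mapping.keys p" "b \<in> Poly_Mapping.keys q"
    using keys_mult by blast
  then show "monomial_deg m \<le> D + D'"
    using assms by (auto simp: deg_le_def monomial_deg_add intro: add_mono)
qed

lemma deg_le_power:
  fixes p :: "('v::finite, 'a::comm_semiring_1) mpoly"
  assumes "deg_le p D"
  shows "deg_le (p ^ k) (k * D)"
  by (induction k) (simp_all add: deg_le_one deg_le_mult[OF assms])

lemma deg_le_prod: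
  fixes f :: "'i \<Rightarrow> ('v::finite, 'a::comm_semiring_1) mpoly"
  assumes "\<And>i. i \<in> I \<Longrightarrow> deg_le (f i) (D i)"
  shows "deg_le (\<Prod>i\<in>I. f i) (\<Sum>i\<in>I. D i)"
  using assms by (induction I rule: infinite_finite_induct) (simp_all add: deg_le_one deg_le_mult)

lemma deg_le_eval_monomial:
  fixes F :: "'w::finite \<Rightarrow> ('v::finite, 'a::comm_ring_1) mpoly"
  shows "deg_le (eval_monomial F m) (\<Sum>w\<in>UNIV. Poly_Mapping.lookup m w * mpoly_deg (F w))"
  unfolding eval_monomial_def by (intro deg_le_prod deg_le_power deg_le_mpoly_deg)

lemma mpoly_deg_pos:
  fixes F :: "'w::finite \<Rightarrow> ('v::finite, 'a::comm_ring_1) mpoly"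
  assumes "alg_indep F"
  shows "1 \<le> mpoly_deg (F w)"
proof (rule ccontr)
  assume "\<not> 1 \<le> mpoly_deg (F w)"
  then have "deg_le (F w) 0"
    using deg_le_mpoly_deg[of "F w"] by (simp add: not_less_eq_eq)
  then have keys: "Poly_Mapping.keys (F w) \<subseteq> {0}"
    by (auto simp: deg_le_def monomial_deg_eq_0_iff)
  define c where "c = Poly_Mapping.lookup (F w) 0"
  have const: "F w = mconst c"
    by (rule poly_mapping_eqI)
      (use keys in \<open>auto simp: c_def mconst_def lookup_single when_def in_keys_iff\<close>)
  define X :: "('w, 'a) mpoly" where "X = Poly_Mapping.single (Poly_Mapping.single w 1) 1"
  have "mpoly_subst (X - mconst c) F = 0"
    using eval_monomial_single[of F w] const
    by (simp add: X_def mpoly_subst_diff mconst_def mpoly_subst_single)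
  moreover have "Poly_Mapping.lookup (X - mconst c) (Poly_Mapping.single w 1) = 1"
    by (simp add: X_def mconst_def lookup_minus lookup_single when_def poly_mapping_eq_iff fun_eq_iff)
  then have "X - mconst c \<noteq> 0"
    by auto
  ultimately show False
    using assms unfolding alg_indep_def by blast
qed

section \<open>Linear independence over a subring\<close>

definition lin_indep_over :: "'r::comm_ring set \<Rightarrow> 'r set \<Rightarrow> bool" where
  "lin_indep_over M S \<longleftrightarrow>
     (\<forall>c. (\<forall>y\<in>S. c y \<in> M) \<longrightarrow> (\<Sum>y\<in>S. c y * y) = 0 \<longrightarrow> (\<forall>y\<in>S. c y = 0))"

lemma lin_indep_overD:
  "lin_indep_over M S \<Longrightarrow> \<forall>y\<in>S. c y \<in> M \<Longrightarrow> (\<Sum>y\<in>S. c y * y) = 0 \<Longrightarrow> y \<in> S \<Longrightarrow> c y = 0"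
  unfolding lin_indep_over_def by blast

lemma in_span_over:
  assumes "finite S" "x \<in> S" "0 \<in> M" "1 \<in> M"
  shows "x \<in> span_over M S"
proof -
  have "(\<Sum>y\<in>S. (if y = x then 1 else 0) * y) = (\<Sum>y\<in>S. if y = x then y else 0)"
    by (rule sum.cong) simp_all
  also have "\<dots> = x"
    using assms by simp
  finally have "(\<Sum>y\<in>S. (if y = x then 1 else 0) * y) = x" .
  then show ?thesis
    using assms unfolding span_over_def by (intro CollectI exI[of _ "\<lambda>y. if y = x then 1 else 0"]) auto
qed

lemma in_span_over_if_dependent_insert:
  fixes M S :: "'f::field set"
  assumes S: "finite S" "x \<notin> S" "lin_indep_over M S"
    and dep: "\<not> lin_indep_over M (insert x S)"
    and closed: "\<And>a b. a \<in> M \<Longrightarrow> b \<in> M \<Longrightarrow> b \<noteq> 0 \<Longrightarrow> - a / b \<in> M"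
  shows "x \<in> span_over M S"
proof -
  obtain c where c: "\<forall>y\<in>insert x S. c y \<in> M" "(\<Sum>y\<in>insert x S. c y * y) = 0"
    and nonzero: "\<exists>y\<in>insert x S. c y \<noteq> 0"
    using dep unfolding lin_indep_over_def by blast
  have sum: "c x * x + (\<Sum>y\<in>S. c y * y) = 0"
    using c(2) S by simp
  have "c x \<noteq> 0"
  proof
    assume "c x = 0"
    then have "\<forall>y\<in>S. c y = 0"
      using sum c(1) S(3) by (auto intro: lin_indep_overD)
    then show False
      using nonzero \<open>c x = 0\<close> by blast
  qed
  have "(\<Sum>y\<in>S. (- c y / c x) * y) = - (\<Sum>y\<in>S. c y * y) / c x"
    by (simp add: sum_divide_distrib sum_negf)
  also have "\<dots> = x"
    using sum \<open>c x \<noteq> 0\<close> by (simp add: field_simps add_eq_0_iff)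
  finally have "(\<Sum>y\<in>S. (- c y / c x) * y) = x" .
  moreover have "\<forall>y\<in>S. - c y / c x \<in> M"
    using c(1) \<open>c x \<noteq> 0\<close> closed by auto
  ultimately show ?thesis
    unfolding span_over_def by (intro CollectI exI[of _ "\<lambda>y. - c y / c x"]) auto
qed

text \<open>A maximal independent subset of \<open>T\<close> spans \<open>T\<close>.\<close>

lemma ext_degree_le:
  fixes M T :: "'f::field set"
  assumes "0 \<in> M" "1 \<in> M"
    and closed: "\<And>a b. a \<in> M \<Longrightarrow> b \<in> M \<Longrightarrow> b \<noteq> 0 \<Longrightarrow> - a / b \<in> M"
    and bound: "\<And>S. finite S \<Longrightarrow> S \<subseteq> T \<Longrightarrow> lin_indep_over M S \<Longrightarrow> card S \<le> N"
  shows "ext_degree M T \<le> enat N"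
proof -
  let ?I = "{S. finite S \<and> S \<subseteq> T \<and> lin_indep_over M S}"
  have "{} \<in> ?I"
    by (simp add: lin_indep_over_def)
  then have nonempty: "card ` ?I \<noteq> {}"
    by blast
  have finite: "finite (card ` ?I)"
    by (rule finite_subset[of _ "{..N}"]) (auto intro: bound)
  obtain S where S: "S \<in> ?I" "card S = Max (card ` ?I)"
    using Max_in[OF finite nonempty] by auto
  have max: "card S' \<le> card S" if "S' \<in> ?I" for S'
    using Max_ge[OF finite] that S(2) by simp
  have "T \<subseteq> span_over M S"
  proof
    fix x assume "x \<in> T"
    show "x \<in> span_over M S"
    proof (cases "x \<in> S")
      case True
      then show ?thesis
        using S assms by (auto intro: in_span_over)
    next
      case False
      then have "\<not> lin_indep_over M (insert x S)"
        using max[of "insert x S"] S \<open>x \<in> T\<close> by auto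
      then show ?thesis
        using S False closed by (auto intro: in_span_over_if_dependent_insert)
    qed
  qed
  then have "ext_degree M T \<le> enat (card S)"
    unfolding ext_degree_def using S by (intro INF_lower) auto
  also have "\<dots> \<le> enat N"
    using S(1) bound by simp
  finally show ?thesis .
qed

lemma to_fract_sum: "to_fract (sum f I) = (\<Sum>i\<in>I. to_fract (f i))"
  by (induction I rule: infinite_finite_induct) simp_all

lemma common_denominator:
  fixes w :: "'i \<Rightarrow> 'a::idom fract"
  assumes "finite J"
  obtains d k where "d \<noteq> 0" "\<And>i. i \<in> J \<Longrightarrow> to_fract (k i) = to_fract d * w i"
  using assms
proof (induction J arbitrary: thesis rule: finite_induct)
  case empty
  show ?case
    by (rule empty.prems[of 1]) simp_all
next
  case (insert x J)
  obtain d k where d: "d \<noteq> 0" and k: "\<And>i. i \<in> J \<Longrightarrow> to_fract (k i) = to_fract d * w i"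
    using insert.IH by blast
  obtain a b where ab: "w x = Fract a b" "b \<noteq> 0"
    by (cases "w x") auto
  let ?k = "\<lambda>i. if i = x then a * d else k i * b"
  show ?case
  proof (rule insert.prems)
    show "d * b \<noteq> 0"
      using d ab by simp
    show "to_fract (?k i) = to_fract (d * b) * w i" if "i \<in> insert x J" for i
    proof (cases "i = x")
      case True
      then show ?thesis
        using ab by (simp add: to_fract_def eq_fract mult_ac)
    next
      case False
      then show ?thesis
        using that k[of i] by (simp add: mult_ac)
    qed
  qed
qed

lemma to_fract_in_frac_of: "a \<in> A \<Longrightarrow> 1 \<in> A \<Longrightarrow> to_fract a \<in> frac_of A"
  unfolding frac_of_def to_fract_def by force

lemma neg_divide_in_frac_of:
  assumes mult: "\<And>a b. a \<in> A \<Longrightarrow> b \<in> A \<Longrightarrow> a * b \<in> A" and uminus: "\<And>a. a \<in> A \<Longrightarrow> - a \<in> A"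
    and "x \<in> frac_of A" "y \<in> frac_of A" "y \<noteq> 0"
  shows "- x / y \<in> frac_of (A :: 'a::idom set)"
proof -
  obtain a1 a2 where x: "x = Fract a1 a2" "a1 \<in> A" "a2 \<in> A" "a2 \<noteq> 0"
    using assms(3) unfolding frac_of_def by blast
  obtain b1 b2 where y: "y = Fract b1 b2" "b1 \<in> A" "b2 \<in> A" "b2 \<noteq> 0"
    using assms(4) unfolding frac_of_def by blast
  have "b1 \<noteq> 0"
    using y \<open>y \<noteq> 0\<close> by (auto simp: fract_collapse)
  then have "- x / y = Fract (- a1 * b2) (a2 * b1)" "a2 * b1 \<noteq> 0"
    using x y by simp_all
  moreover have "- a1 * b2 \<in> A" "a2 * b1 \<in> A"
    using x y by (auto intro: mult uminus)
  ultimately show ?thesis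
    unfolding frac_of_def by blast
qed

lemma lin_indep_over_clear_denominators:
  fixes S :: "'a::idom fract set"
  assumes "1 \<in> A" "finite S" "lin_indep_over (frac_of A) S"
  obtains G where "finite G" "card G = card S" "lin_indep_over A G"
proof -
  obtain d k where d: "d \<noteq> 0" and k: "\<And>y. y \<in> S \<Longrightarrow> to_fract (k y) = to_fract d * y"
    using common_denominator[OF \<open>finite S\<close>, of id] by auto
  have inj: "inj_on k S"
    by (rule inj_onI) (metis d k mult_left_cancel to_fract_eq_0_iff)
  have "lin_indep_over A (k ` S)"
    unfolding lin_indep_over_def
  proof (intro allI impI)
    fix c assume c: "\<forall>g\<in>k ` S. c g \<in> A" and "(\<Sum>g\<in>k ` S. c g * g) = 0"
    then have "to_fract (\<Sum>y\<in>S. c (k y) * k y) = 0"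
      by (simp add: sum.reindex[OF inj])
    then have "to_fract d * (\<Sum>y\<in>S. to_fract (c (k y)) * y) = 0"
      by (simp add: to_fract_sum k sum_distrib_left mult_ac)
    then have "(\<Sum>y\<in>S. to_fract (c (k y)) * y) = 0"
      using d by simp
    moreover have "\<forall>y\<in>S. to_fract (c (k y)) \<in> frac_of A"
      using c \<open>1 \<in> A\<close> by (auto intro: to_fract_in_frac_of)
    ultimately have "\<forall>y\<in>S. to_fract (c (k y)) = 0"
      using assms(3) lin_indep_overD[of _ S "\<lambda>y. to_fract (c (k y))"] by blast
    then show "\<forall>g\<in>k ` S. c g = 0"
      by simp
  qed
  then show thesis
    using that[of "k ` S"] \<open>finite S\<close> card_image[OF inj] by simp
qed

lemma (in vector_space) card_le_of_independent_family:
  assumes "finite I" "finite T" "v ` I \<subseteq> span T"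
    and indep: "\<And>c. (\<Sum>i\<in>I. c i *s v i) = 0 \<Longrightarrow> \<forall>i\<in>I. c i = 0"
  shows "card I \<le> card T"
proof -
  have inj: "inj_on v I"
  proof (rule inj_onI, rule ccontr)
    fix i j assume ij: "i \<in> I" "j \<in> I" "v i = v j" "i \<noteq> j"
    let ?c = "\<lambda>l. if l = i then 1 else if l = j then - 1 else 0"
    have "(\<Sum>l\<in>I. ?c l *s v l) = (\<Sum>l\<in>I. (if l = i then v i else 0) - (if l = j then v j else 0))"
      using ij by (intro sum.cong) auto
    also have "\<dots> = 0"
      using ij \<open>finite I\<close> by (simp add: sum_subtractf)
    finally show False
      using indep[of ?c] ij by auto
  qed
  have "independent (v ` I)"
  proof (rule independent_if_scalars_zero)
    fix f x assume "(\<Sum>x\<in>v ` I. f x *s x) = 0" "x \<in> v ` I"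
    then show "f x = 0"
      using indep[of "f \<circ> v"] by (auto simp: sum.reindex[OF inj])
  qed (use \<open>finite I\<close> in simp)
  then have "card (v ` I) \<le> card T"
    using independent_span_bound assms by blast
  then show ?thesis
    by (simp add: card_image[OF inj])
qed

interpretation poly_mapping_vs:
  vector_space "\<lambda>c (p :: 'm::comm_monoid_add \<Rightarrow>\<^sub>0 'f::field). Poly_Mapping.single 0 c * p"
  by unfold_locales
    (simp_all add: distrib_left distrib_right single_add mult.assoc[symmetric] mult_single)

lemma in_span_monomials:
  fixes p :: "'m::comm_monoid_add \<Rightarrow>\<^sub>0 'f::field"
  assumes "Poly_Mapping.keys p \<subseteq> T"
  shows "p \<in> poly_mapping_vs.span ((\<lambda>a. Poly_Mapping.single a 1) ` T)"
proof -
  have "p = (\<Sum>a\<in>Poly_Mapping.keys p. Poly_Mapping.single 0 (Poly_Mapping.lookup p a) * Poly_Mapping.single a 1)"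
    by (subst poly_mapping_sum_single) (simp add: mult_single)
  also have "\<dots> \<in> poly_mapping_vs.span ((\<lambda>a. Poly_Mapping.single a 1) ` T)"
    using assms by (intro poly_mapping_vs.span_sum poly_mapping_vs.span_scale poly_mapping_vs.span_base) auto
  finally show ?thesis .
qed

lemma lookup_map_to_fract:
  "Poly_Mapping.lookup (Poly_Mapping.map to_fract p) m = to_fract (Poly_Mapping.lookup p m)"
  by (simp add: lookup_map_zero)

lemma keys_map_to_fract: "Poly_Mapping.keys (Poly_Mapping.map to_fract p) = Poly_Mapping.keys p"
  by (auto simp: in_keys_iff lookup_map_to_fract)

lemma independent_family_map_to_fract:
  fixes h :: "'i \<Rightarrow> ('m::comm_monoid_add \<Rightarrow>\<^sub>0 'a::idom)"
  assumes "finite I"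
    and indep: "\<And>k. (\<Sum>i\<in>I. Poly_Mapping.single 0 (k i) * h i) = 0 \<Longrightarrow> \<forall>i\<in>I. k i = 0"
    and zero: "(\<Sum>i\<in>I. Poly_Mapping.single 0 (c i) * Poly_Mapping.map to_fract (h i)) = 0"
  shows "\<forall>i\<in>I. c i = 0"
proof -
  obtain d k where d: "d \<noteq> 0" and k: "\<And>i. i \<in> I \<Longrightarrow> to_fract (k i) = to_fract d * c i"
    using common_denominator[OF \<open>finite I\<close>] by metis
  have "Poly_Mapping.map to_fract (\<Sum>i\<in>I. Poly_Mapping.single 0 (k i) * h i)
      = Poly_Mapping.single 0 (to_fract d) * (\<Sum>i\<in>I. Poly_Mapping.single 0 (c i) * Poly_Mapping.map to_fract (h i))"
    by (rule poly_mapping_eqI)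
      (simp add: lookup_map_to_fract lookup_sum lookup_single_0_mult to_fract_sum k sum_distrib_left mult.assoc
        cong: sum.cong)
  then have "(\<Sum>i\<in>I. Poly_Mapping.single 0 (k i) * h i) = 0"
    by (simp add: zero map_eq_zero_iff lookup_map_to_fract poly_mapping_eq_iff fun_eq_iff in_keys_iff)
  then have k_0: "\<forall>i\<in>I. k i = 0"
    by (rule indep)
  show ?thesis
  proof
    fix i assume "i \<in> I"
    then have "to_fract d * c i = 0"
      using k[of i] k_0 by simp
    then show "c i = 0"
      using d by simp
  qed
qed

lemma card_le_card_of_independent_family:
  fixes h :: "'i \<Rightarrow> ('m::comm_monoid_add \<Rightarrow>\<^sub>0 'a::idom)"
  assumes "finite I" "finite T" and keys: "\<And>i. i \<in> I \<Longrightarrow> Poly_Mapping.keys (h i) \<subseteq> T"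
    and indep: "\<And>k. (\<Sum>i\<in>I. Poly_Mapping.single 0 (k i) * h i) = 0 \<Longrightarrow> \<forall>i\<in>I. k i = 0"
  shows "card I \<le> card T"
proof -
  let ?T = "(\<lambda>a. Poly_Mapping.single a (1 :: 'a fract)) ` T"
  have "card I \<le> card ?T"
  proof (rule poly_mapping_vs.card_le_of_independent_family)
    show "finite I" "finite ?T"
      using assms by simp_all
    show "\<forall>i\<in>I. c i = 0"
      if "(\<Sum>i\<in>I. Poly_Mapping.single 0 (c i) * Poly_Mapping.map to_fract (h i)) = 0" for c
      using \<open>finite I\<close> indep that by (rule independent_family_map_to_fract)
    show "(\<lambda>i. Poly_Mapping.map to_fract (h i)) ` I \<subseteq> poly_mapping_vs.span ?T"
    proof (rule image_subsetI)
      fix i assume "i \<in> I"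
      then show "Poly_Mapping.map to_fract (h i) \<in> poly_mapping_vs.span ?T"
        using keys[of i] by (intro in_span_monomials) (simp add: keys_map_to_fract)
    qed
  qed
  also have "\<dots> \<le> card T"
    by (rule card_image_le) fact
  finally show ?thesis .
qed

lemma independent_monomial_multiples:
  fixes F :: "'w::finite \<Rightarrow> ('v, 'a::comm_ring_1) mpoly"
  assumes indep_F: "alg_indep F" and "finite B" and G: "finite G" "lin_indep_over (gen_subalg F) G"
    and zero: "(\<Sum>i\<in>B \<times> G. mconst (k i) * (eval_monomial F (fst i) * snd i)) = 0"
  shows "\<forall>i\<in>B \<times> G. k i = 0"
proof -
  define Q :: "('v, 'a) mpoly \<Rightarrow> ('w, 'a) mpoly" where
    "Q g = (\<Sum>b\<in>B. Poly_Mapping.single b (k (b, g)))" for g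
  have "(\<Sum>i\<in>B \<times> G. mconst (k i) * (eval_monomial F (fst i) * snd i))
      = (\<Sum>g\<in>G. \<Sum>b\<in>B. mconst (k (b, g)) * eval_monomial F b * g)"
    by (simp add: sum.cartesian_product' mult.assoc) (rule sum.swap)
  also have "\<dots> = (\<Sum>g\<in>G. mpoly_subst (Q g) F * g)"
    by (simp add: Q_def mpoly_subst_sum mpoly_subst_single sum_distrib_right)
  finally have sum_0: "(\<Sum>g\<in>G. mpoly_subst (Q g) F * g) = 0"
    using zero by simp
  have "mpoly_subst (Q g) F = 0" if "g \<in> G" for g
  proof (rule lin_indep_overD[OF G(2) _ sum_0 that])
    show "\<forall>g\<in>G. mpoly_subst (Q g) F \<in> gen_subalg F"
      by (simp add: gen_subalg_def)
  qed
  then have Q_0: "Q g = 0" if "g \<in> G" for g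
    using indep_F that unfolding alg_indep_def by blast
  have lookup_Q: "Poly_Mapping.lookup (Q g) b = k (b, g)" if "b \<in> B" for b g
    using that \<open>finite B\<close> by (simp add: Q_def lookup_sum lookup_single when_def)
  show ?thesis
  proof
    fix i assume "i \<in> B \<times> G"
    then obtain b g where "i = (b, g)" "b \<in> B" "g \<in> G"
      by blast
    then show "k i = 0"
      using lookup_Q[of b g] Q_0[of g] by simp
  qed
qed

section \<open>Counting exponent vectors\<close>

definition weight_le :: "('w::finite \<Rightarrow> nat) \<Rightarrow> nat \<Rightarrow> ('w \<Rightarrow> nat) set" where
  "weight_le d D = {f. (\<Sum>w\<in>UNIV. f w * d w) \<le> D}"

lemma weight_le_subset_PiE:
  assumes "\<And>w. 1 \<le> d w"
  shows "weight_le d D \<subseteq> Pi\<^sub>E UNIV (\<lambda>_. {..D})"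
proof
  fix f assume f: "f \<in> weight_le d D"
  have "f w \<le> D" for w
  proof -
    have "f w \<le> f w * d w"
      using assms[of w] by simp
    also have "\<dots> \<le> (\<Sum>w\<in>UNIV. f w * d w)"
      by (rule member_le_sum) auto
    finally show ?thesis
      using f by (simp add: weight_le_def)
  qed
  then show "f \<in> Pi\<^sub>E UNIV (\<lambda>_. {..D})"
    by (simp add: PiE_UNIV_domain)
qed

lemma finite_weight_le:
  assumes "\<And>w. 1 \<le> d w"
  shows "finite (weight_le d D)"
  by (rule finite_subset[OF weight_le_subset_PiE[OF assms]]) (simp add: finite_PiE)

lemma card_weight_le_le_power:
  fixes d :: "'w::finite \<Rightarrow> nat"
  assumes "\<And>w. 1 \<le> d w"
  shows "card (weight_le d D) \<le> (D + 1) ^ card (UNIV :: 'w set)"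
proof -
  have "card (weight_le d D) \<le> card (Pi\<^sub>E (UNIV :: 'w set) (\<lambda>_. {..D}))"
    by (rule card_mono[OF _ weight_le_subset_PiE[OF assms]]) (simp add: finite_PiE)
  then show ?thesis
    by (simp add: card_PiE)
qed

lemma card_weight_le_pos:
  assumes "\<And>w. 1 \<le> d w"
  shows "0 < card (weight_le d D)"
proof -
  have "(\<lambda>_. 0) \<in> weight_le d D"
    by (simp add: weight_le_def)
  then show ?thesis
    using finite_weight_le[OF assms] by (auto simp: card_gt_0_iff)
qed

lemma inj_div_mod_pair: "inj (\<lambda>f :: 'w \<Rightarrow> nat. (\<lambda>w. f w div d w, \<lambda>w. f w mod d w))"
proof (rule injI)
  fix f g :: "'w \<Rightarrow> nat"
  assume "(\<lambda>w. f w div d w, \<lambda>w. f w mod d w) = (\<lambda>w. g w div d w, \<lambda>w. g w mod d w)"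
  then have div: "f w div d w = g w div d w" and mod: "f w mod d w = g w mod d w" for w
    by (simp_all add: fun_eq_iff)
  show "f = g"
  proof
    fix w
    have "f w = f w div d w * d w + f w mod d w"
      by simp
    also have "\<dots> = g w"
      by (simp add: div mod)
    finally show "f w = g w" .
  qed
qed

text \<open>Division with remainder \<open>f w = q w * d w + r w\<close> maps \<open>weight_le (\<lambda>_. 1) D\<close>
  injectively into \<open>weight_le d D \<times> (\<Pi>\<^sub>w {..<d w})\<close>.\<close>

lemma card_weight_le_one_le:
  fixes d :: "'w::finite \<Rightarrow> nat"
  assumes d: "\<And>w. 1 \<le> d w"
  shows "card (weight_le (\<lambda>_::'w. 1) D) \<le> (\<Prod>w\<in>UNIV. d w) * card (weight_le d D)"
proof -
  let ?N = "weight_le (\<lambda>_::'w. 1) D" and ?R = "Pi\<^sub>E (UNIV :: 'w set) (\<lambda>w. {..<d w})"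
  define \<phi> where "\<phi> f = (\<lambda>w. f w div d w, \<lambda>w. f w mod d w)" for f :: "'w \<Rightarrow> nat"
  have inj: "inj \<phi>"
    unfolding \<phi>_def by (rule inj_div_mod_pair)
  have maps: "\<phi> f \<in> weight_le d D \<times> ?R" if "f \<in> ?N" for f
  proof -
    have "(\<Sum>w\<in>UNIV. f w div d w * d w) \<le> (\<Sum>w\<in>UNIV. f w)"
      by (intro sum_mono) (simp add: div_times_less_eq_dividend)
    moreover have "f w mod d w < d w" for w
      using d[of w] by simp
    ultimately show ?thesis
      using that by (simp add: \<phi>_def weight_le_def PiE_UNIV_domain)
  qed
  have "inj_on \<phi> ?N"
    using inj by (rule inj_on_subset) simp
  moreover have "\<phi> ` ?N \<subseteq> weight_le d D \<times> ?R"
    using maps by blast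
  moreover have "finite (weight_le d D \<times> ?R)"
    using finite_weight_le[of d D, OF d] by (simp add: finite_PiE)
  ultimately have "card ?N \<le> card (weight_le d D \<times> ?R)"
    by (rule card_inj_on_le)
  also have "\<dots> = (\<Prod>w\<in>UNIV. d w) * card (weight_le d D)"
    by (simp add: card_cartesian_product card_PiE)
  finally show ?thesis .
qed

lemma bij_lookup: "bij (Poly_Mapping.lookup :: ('w::finite \<Rightarrow>\<^sub>0 'b::zero) \<Rightarrow> 'w \<Rightarrow> 'b)"
proof (rule bijI)
  show "inj (Poly_Mapping.lookup :: ('w \<Rightarrow>\<^sub>0 'b) \<Rightarrow> 'w \<Rightarrow> 'b)"
    by (rule injI) (rule poly_mapping_eqI, simp)
  show "surj (Poly_Mapping.lookup :: ('w \<Rightarrow>\<^sub>0 'b) \<Rightarrow> 'w \<Rightarrow> 'b)"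
    by (rule surjI[of _ Abs_poly_mapping]) simp
qed

lemma card_vimage_lookup: "card (Poly_Mapping.lookup -` (A :: ('w::finite \<Rightarrow> 'b::zero) set)) = card A"
  using bij_lookup by (intro card_vimage_inj) (auto simp: bij_def)

lemma finite_vimage_lookup: "finite (Poly_Mapping.lookup -` (A :: ('w::finite \<Rightarrow> 'b::zero) set)) \<longleftrightarrow> finite A"
  using bij_lookup by (rule finite_vimage_iff)

text \<open>The products \<open>F\<^sup>\<beta> g\<close> with \<open>\<beta>\<close> of weighted degree at most \<open>D\<close> and \<open>g \<in> G\<close> are
  \<open>K\<close>-linearly independent and have degree at most \<open>D + E\<close>.\<close>

lemma card_weight_le_mult_card_le:
  fixes F :: "'w::finite \<Rightarrow> ('v::finite, 'a::idom) mpoly"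
  assumes indep_F: "alg_indep F" and G: "finite G" "lin_indep_over (gen_subalg F) G"
    and deg_G: "\<forall>g\<in>G. deg_le g E"
  shows "card (weight_le (\<lambda>w. mpoly_deg (F w)) D) * card G \<le> card (weight_le (\<lambda>_::'v. 1) (D + E))"
proof -
  define d where "d w = mpoly_deg (F w)" for w
  have d: "1 \<le> d w" for w
    unfolding d_def using indep_F by (rule mpoly_deg_pos)
  define I where "I = (Poly_Mapping.lookup -` weight_le d D) \<times> G"
  define T :: "('v \<Rightarrow>\<^sub>0 nat) set" where "T = Poly_Mapping.lookup -` weight_le (\<lambda>_. 1) (D + E)"
  have finite_exponents: "finite (Poly_Mapping.lookup -` weight_le d D)"
    using finite_weight_le[of d D, OF d] by (simp add: finite_vimage_lookup)
  have "card I \<le> card T"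
  proof (rule card_le_card_of_independent_family[where h = "\<lambda>i. eval_monomial F (fst i) * snd i"])
    show "finite I" "finite T"
      using G d by (simp_all add: I_def T_def finite_vimage_lookup finite_weight_le)
    show "Poly_Mapping.keys (eval_monomial F (fst i) * snd i) \<subseteq> T" if "i \<in> I" for i
    proof -
      have "deg_le (eval_monomial F (fst i) * snd i) ((\<Sum>w\<in>UNIV. Poly_Mapping.lookup (fst i) w * d w) + E)"
        using that deg_G unfolding d_def by (intro deg_le_mult deg_le_eval_monomial) (auto simp: I_def)
      then have "deg_le (eval_monomial F (fst i) * snd i) (D + E)"
        by (rule deg_le_mono) (use that in \<open>auto simp: I_def weight_le_def\<close>)
      then show ?thesis
        by (auto simp: deg_le_def T_def weight_le_def monomial_deg_def)
    qed
    show "\<forall>i\<in>I. k i = 0" if "(\<Sum>i\<in>I. Poly_Mapping.single 0 (k i) * (eval_monomial F (fst i) * snd i)) = 0" for k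
      using independent_monomial_multiples[OF indep_F finite_exponents G, of k] that
      by (simp add: I_def mconst_def)
  qed
  then show ?thesis
    by (simp add: I_def T_def d_def[abs_def] card_cartesian_product card_vimage_lookup)
qed

section \<open>The degree bound\<close>

lemma power_div_exp_tendsto_0:
  fixes q :: real
  assumes "1 < q"
  shows "(\<lambda>k. real k ^ n / q ^ k) \<longlonglongrightarrow> 0"
proof -
  define L where "L = ln q"
  have "L > 0"
    using assms by (simp add: L_def)
  then have "filterlim (\<lambda>k::nat. real k * L) at_top sequentially"
    by (intro filterlim_at_top_mult_tendsto_pos[OF tendsto_const] filterlim_real_sequentially)
  then have "(\<lambda>k. (real k * L) ^ n / exp (real k * L)) \<longlonglongrightarrow> 0"
    by (rule filterlim_compose[OF tendsto_power_div_exp_0])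
  then have "(\<lambda>k. (real k * L) ^ n / exp (real k * L) / L ^ n) \<longlonglongrightarrow> 0 / L ^ n"
    using \<open>L > 0\<close> by (intro tendsto_divide tendsto_const) simp_all
  moreover have "(real k * L) ^ n / exp (real k * L) / L ^ n = real k ^ n / q ^ k" for k
  proof -
    have "exp (real k * L) = q ^ k"
      using assms by (simp add: L_def exp_of_nat_mult)
    then show ?thesis
      using \<open>L > 0\<close> by (simp add: power_mult_distrib)
  qed
  ultimately show ?thesis
    by simp
qed

lemma exists_power_gt_poly:
  fixes P s E n :: nat
  assumes "0 < P" "P < s"
  shows "\<exists>k. P ^ k * (k * E + 1) ^ n < s ^ k"
proof -
  define q where "q = real s / real P"
  have "1 < q"
    using assms by (simp add: q_def)
  have "(\<lambda>k. real (E + 1) ^ n * (real k ^ n / q ^ k)) \<longlonglongrightarrow> real (E + 1) ^ n * 0"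
    by (intro tendsto_mult tendsto_const power_div_exp_tendsto_0 \<open>1 < q\<close>)
  then have "eventually (\<lambda>k. real (E + 1) ^ n * (real k ^ n / q ^ k) < 1) sequentially"
    by (rule order_tendstoD(2)) simp
  then obtain N where N: "\<And>k. N \<le> k \<Longrightarrow> real (E + 1) ^ n * (real k ^ n / q ^ k) < 1"
    unfolding eventually_sequentially by blast
  define k where "k = max N 1"
  have small: "real (E + 1) ^ n * (real k ^ n / q ^ k) < 1" and "1 \<le> k"
    using N[of k] by (simp_all add: k_def)
  have "real ((k * E + 1) ^ n) \<le> real (((E + 1) * k) ^ n)"
    using \<open>1 \<le> k\<close> by (intro of_nat_mono power_mono) (simp_all add: algebra_simps)
  also have "\<dots> = real (E + 1) ^ n * real k ^ n"
    by (simp only: of_nat_power of_nat_mult power_mult_distrib)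
  also have "\<dots> < q ^ k"
    using small \<open>1 < q\<close> by (simp add: field_simps)
  finally have "real (P ^ k * (k * E + 1) ^ n) < real (s ^ k)"
    using assms by (simp add: q_def power_divide field_simps)
  then show ?thesis
    by (intro exI[of _ k]) (simp only: of_nat_less_iff)
qed

text \<open>Iterating the recurrence gives \<open>s\<^sup>k B 0 \<le> P\<^sup>k B (k E)\<close>, which the polynomial growth
  of \<open>B\<close> rules out for \<open>s > P\<close>.\<close>

lemma le_of_growth_recurrence:
  fixes B :: "nat \<Rightarrow> nat"
  assumes step: "\<And>D. s * B D \<le> P * B (D + E)"
    and pos: "0 < B 0" and poly: "\<And>D. B D \<le> (D + 1) ^ n"
  shows "s \<le> P"
proof (rule ccontr)
  assume "\<not> s \<le> P"
  have iterate: "s ^ k * B 0 \<le> P ^ k * B (k * E)" for k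
  proof (induction k)
    case (Suc k)
    have "s ^ Suc k * B 0 \<le> s * (P ^ k * B (k * E))"
      using Suc by simp
    also have "\<dots> = P ^ k * (s * B (k * E))"
      by (simp add: mult_ac)
    also have "\<dots> \<le> P ^ k * (P * B (k * E + E))"
      using step by simp
    finally show ?case
      by (simp add: mult_ac add.commute)
  qed simp
  have "0 < P"
    using iterate[of 1] pos \<open>\<not> s \<le> P\<close> by (auto intro: Nat.gr0I)
  then obtain k where k: "P ^ k * (k * E + 1) ^ n < s ^ k"
    using exists_power_gt_poly \<open>\<not> s \<le> P\<close> by (meson not_le)
  have "s ^ k \<le> s ^ k * B 0"
    using pos by simp
  also have "\<dots> \<le> P ^ k * B (k * E)"
    by (rule iterate)
  also have "\<dots> \<le> P ^ k * (k * E + 1) ^ n"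
    using poly[of "k * E"] by simp
  finally show False
    using k by simp
qed

lemma card_le_prod_mpoly_deg_of_lin_indep:
  fixes F :: "'v::finite \<Rightarrow> ('v, 'a::idom) mpoly"
  assumes indep_F: "alg_indep F" and G: "finite G" "lin_indep_over (gen_subalg F) G"
  shows "card G \<le> (\<Prod>v\<in>UNIV. mpoly_deg (F v))"
proof -
  define d where "d v = mpoly_deg (F v)" for v
  have d: "1 \<le> d v" for v
    unfolding d_def using indep_F by (rule mpoly_deg_pos)
  define E where "E = (\<Sum>g\<in>G. mpoly_deg g)"
  have deg_G: "\<forall>g\<in>G. deg_le g E"
    unfolding E_def using G(1) by (auto intro: deg_le_mono[OF deg_le_mpoly_deg] member_le_sum)
  show ?thesis
  proof (rule le_of_growth_recurrence[where B = "\<lambda>D. card (weight_le d D)"])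
    fix D
    have "card G * card (weight_le d D) \<le> card (weight_le (\<lambda>_::'v. 1) (D + E))"
      using card_weight_le_mult_card_le[OF indep_F G deg_G] by (simp add: d_def[abs_def] mult.commute)
    also have "\<dots> \<le> (\<Prod>v\<in>UNIV. d v) * card (weight_le d (D + E))"
      using d by (rule card_weight_le_one_le)
    finally show "card G * card (weight_le d D) \<le> (\<Prod>v\<in>UNIV. mpoly_deg (F v)) * card (weight_le d (D + E))"
      by (simp add: d_def)
    show "card (weight_le d D) \<le> (D + 1) ^ card (UNIV :: 'v set)"
      using d by (rule card_weight_le_le_power)
  qed (use d card_weight_le_pos in blast)
qed

theorem mainTheorem4:
  fixes F :: "'v::{finite,linorder} \<Rightarrow> ('v, 'a::idom) mpoly"
  assumes "alg_indep F"
  shows "sep_degree (frac_of (gen_subalg F)) (frac_of UNIV) \<le> enat (\<Prod>v\<in>UNIV. mpoly_deg (F v))"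
  unfolding sep_degree_def
proof (rule ext_degree_le)
  show "0 \<in> frac_of (gen_subalg F)" "1 \<in> frac_of (gen_subalg F)"
    using to_fract_in_frac_of[OF gen_subalg_0 gen_subalg_1] to_fract_in_frac_of[OF gen_subalg_1 gen_subalg_1]
    by simp_all
  show "- x / y \<in> frac_of (gen_subalg F)"
    if "x \<in> frac_of (gen_subalg F)" "y \<in> frac_of (gen_subalg F)" "y \<noteq> 0" for x y
    using that by (intro neg_divide_in_frac_of gen_subalg_mult gen_subalg_uminus)
  show "card S \<le> (\<Prod>v\<in>UNIV. mpoly_deg (F v))"
    if S: "finite S" "S \<subseteq> sep_closure (frac_of (gen_subalg F)) (frac_of UNIV)"
      "lin_indep_over (frac_of (gen_subalg F)) S" for S
  proof -
    obtain G where G: "finite G" "card G = card S" "lin_indep_over (gen_subalg F) G"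
      using lin_indep_over_clear_denominators[OF gen_subalg_1 S(1,3)] by blast
    then show ?thesis
      using card_le_prod_mpoly_deg_of_lin_indep[OF assms G(1,3)] by simp
  qed
qed

end
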